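(* Let $V=\{1,\dots,n\}$ and let $f_z:\{0,1\}^n\to\mathbb{R}_+$ be a set function (identified with a function of binary vectors). Suppose there is a sequence of polynomials $\{\hat f_z^L\}_{L\ge1}$, $\hat f_z^L:\mathbb{R}^n\to\mathbb{R}$, and numbers $\varepsilon_z(L)\ge 0$ with $\lim_{L\to\infty}\varepsilon_z(L)=0$ such that $|f_z(\mathbf{x})-\hat f_z^L(\mathbf{x})|\le \varepsilon_z(L)$ for all $\mathbf{x}\in\{0,1\}^n$. Let $G_z$ be the multilinear relaxation of $f_z$ and let $\widehat{\nabla G_z^L}$ be the polynomial estimator defined below. Then for every $\mathbf{y}\in\mathcal{C}$, $$\big\|\nabla G_z(\mathbf{y})-\widehat{\nabla G_z^L}(\mathbf{y})\big\|_2\le 2\sqrt{n}\,\varepsilon_z(L).$$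
   Context: For $\mathbf{y}\in[0,1]^n$, $\mathbf{x}\sim\mathbf{y}$ denotes a random vector in $\{0,1\}^n$ with independent Bernoulli coordinates, $P(x_i=1)=y_i$. The multilinear relaxation of $f_z$ is $G_z(\mathbf{y})=\mathbb{E}_{\mathbf{x}\sim\mathbf{y}}[f_z(\mathbf{x})]=\sum_{\mathbf{x}\in\{0,1\}^n}f_z(\mathbf{x})\prod_{i}y_i^{x_i}(1-y_i)^{1-x_i}$. For a polynomial $p(\mathbf{y})=c_0+\sum_{\ell}c_\ell\prod_{i\in J_\ell}y_i^{k_i^\ell}$ (with $k_i^\ell\ge1$), its multilinearization is $\dot p(\mathbf{y})=c_0+\sum_\ell c_\ell\prod_{i\in J_\ell}y_i$. For $\mathbf{y}$, $[\mathbf{y}]_{+i}$ and $[\mathbf{y}]_{-i}$ denote $\mathbf{y}$ with the $i$-th coordinate set to $1$ and $0$ respectively. The polynomial estimator is the vector with coordinates $\big(\widehat{\nabla G_z^L}(\mathbf{y})\big)_i=\mathbb{E}_{\mathbf{x}\sim\mathbf{y}}[\hat f_z^L([\mathbf{x}]_{+i})]-\mathbb{E}_{\mathbf{x}\sim\mathbf{y}}[\hat f_z^L([\mathbf{x}]_{-i})]=\dot{\hat f}{}_z^L([\mathbf{y}]_{+i})-\dot{\hat f}{}_z^L([\mathbf{y}]_{-i})$, $i\in V$. $\mathcal{C}\subseteq[0,1]^n$ is a matroid polytope (convex hull of the indicator vectors of the independent sets of a matroid on $V$). *)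

theory Defs
  imports "HOL-Analysis.Analysis"
begin

text \<open>Ground set V is the finite type 'n, n = CARD('n). Subsets of V are identified
with their indicator vectors in real^'n.\<close>

definition ind_vec :: "'n::finite set \<Rightarrow> real ^ 'n" where
  "ind_vec S = (\<chi> i. if i \<in> S then 1 else 0)"

text \<open>Probability that x ~ y (independent Bernoulli coordinates) equals ind_vec S.\<close>
definition bern_prob :: "real ^ 'n::finite \<Rightarrow> 'n set \<Rightarrow> real" where
  "bern_prob y S = (\<Prod>i\<in>UNIV. if i \<in> S then y $ i else 1 - y $ i)"

definition multilinear_relax :: "('n::finite set \<Rightarrow> real) \<Rightarrow> real ^ 'n \<Rightarrow> real" where
  "multilinear_relax f y = (\<Sum>S\<in>UNIV. f S * bern_prob y S)"

definition poly_estimator :: "(real ^ 'n::finite \<Rightarrow> real) \<Rightarrow> real ^ 'n \<Rightarrow> real ^ 'n" where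
  "poly_estimator fhat y = (\<chi> i.
      (\<Sum>S\<in>UNIV. fhat (ind_vec (insert i S)) * bern_prob y S)
    - (\<Sum>S\<in>UNIV. fhat (ind_vec (S - {i})) * bern_prob y S))"

definition is_polynomial :: "(real ^ 'n::finite \<Rightarrow> real) \<Rightarrow> bool" where
  "is_polynomial p \<longleftrightarrow> (\<exists>K :: ('n \<Rightarrow> nat) set. \<exists>c :: ('n \<Rightarrow> nat) \<Rightarrow> real.
      finite K \<and> (\<forall>y. p y = (\<Sum>k\<in>K. c k * (\<Prod>i\<in>UNIV. (y $ i) ^ k i))))"

definition matroid_indep :: "'n::finite set set \<Rightarrow> bool" where
  "matroid_indep M \<longleftrightarrow>
     {} \<in> M \<and>
     (\<forall>A B. B \<in> M \<and> A \<subseteq> B \<longrightarrow> A \<in> M) \<and>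
     (\<forall>A B. A \<in> M \<and> B \<in> M \<and> card A < card B \<longrightarrow> (\<exists>x\<in>B - A. insert x A \<in> M))"

definition matroid_polytope :: "'n::finite set set \<Rightarrow> (real ^ 'n) set" where
  "matroid_polytope M = convex hull (ind_vec ` M)"

end

theory Submission
  imports Defs
begin

text \<open>The multilinear relaxation is affine in each coordinate; conditioning on the
  i-th Bernoulli variable shows that its i-th partial derivative is
  E[f(x \<union> {i})] - E[f(x - {i})] for x distributed according to y. The estimator is the
  same expression with f replaced by fhat, so each coordinate of the error is a difference
  of two expectations of f - fhat, each of absolute value at most eps, because y lies in
  the unit cube and so bern_prob y is a probability distribution.\<close>

definition bern_factor :: "real ^ 'n::finite \<Rightarrow> 'n set \<Rightarrow> 'n \<Rightarrow> real" where
  "bern_factor y S j = (if j \<in> S then y $ j else 1 - y $ j)"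

definition bern_prob_except :: "real ^ 'n::finite \<Rightarrow> 'n \<Rightarrow> 'n set \<Rightarrow> real" where
  "bern_prob_except y i S = (\<Prod>j\<in>UNIV - {i}. bern_factor y S j)"

lemma bern_prob_eq_prod_factor: "bern_prob y S = (\<Prod>j\<in>UNIV. bern_factor y S j)"
  by (simp add: bern_prob_def bern_factor_def)

lemma bern_prob_split: "bern_prob y S = bern_factor y S i * bern_prob_except y i S"
  unfolding bern_prob_eq_prod_factor bern_prob_except_def by (rule prod.remove) simp_all

lemma bern_prob_except_insert [simp]: "bern_prob_except y i (insert i S) = bern_prob_except y i S"
  unfolding bern_prob_except_def bern_factor_def by (intro prod.cong) auto

lemma bern_prob_insert: "bern_prob y (insert i S) = y $ i * bern_prob_except y i S"
  by (simp add: bern_prob_split[of y _ i] bern_factor_def)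

lemma bern_prob_not_mem: "i \<notin> S \<Longrightarrow> bern_prob y S = (1 - y $ i) * bern_prob_except y i S"
  by (simp add: bern_prob_split[of y _ i] bern_factor_def)

lemma sum_UNIV_set_split_elem:
  fixes h :: "'a::finite set \<Rightarrow> 'b::comm_monoid_add"
  shows "(\<Sum>S\<in>UNIV. h S) = (\<Sum>S | i \<notin> S. h (insert i S) + h S)"
proof -
  have UNIV_split: "UNIV = insert i ` {S. i \<notin> S} \<union> {S. i \<notin> S}"
    by (auto intro: image_eqI[of _ _ "_ - {i}"])
  have "inj_on (insert i) {S. i \<notin> S}"
    by (rule inj_onI) (metis Diff_insert_absorb mem_Collect_eq)
  then have "(\<Sum>S\<in>insert i ` {S. i \<notin> S}. h S) = (\<Sum>S | i \<notin> S. h (insert i S))"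
    by (simp add: sum.reindex)
  then show ?thesis
    by (subst UNIV_split, subst sum.union_disjoint) (auto simp: sum.distrib)
qed

lemma multilinear_relax_condition:
  "multilinear_relax g y =
     (\<Sum>S | i \<notin> S. (y $ i * g (insert i S) + (1 - y $ i) * g S) * bern_prob_except y i S)"
  unfolding multilinear_relax_def sum_UNIV_set_split_elem[of _ i]
  by (intro sum.cong) (auto simp: bern_prob_insert bern_prob_not_mem algebra_simps)

lemma multilinear_relax_insert:
  "multilinear_relax (\<lambda>S. g (insert i S)) y = (\<Sum>S | i \<notin> S. g (insert i S) * bern_prob_except y i S)"
  by (simp add: multilinear_relax_condition[of _ _ i] algebra_simps)

lemma multilinear_relax_remove:
  "multilinear_relax (\<lambda>S. g (S - {i})) y = (\<Sum>S | i \<notin> S. g S * bern_prob_except y i S)"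
  unfolding multilinear_relax_condition[of _ _ i]
  by (intro sum.cong) (auto simp: algebra_simps)

lemma gderiv_bern_prob:
  "GDERIV (\<lambda>y. bern_prob y S) y :> (\<chi> j. (if j \<in> S then 1 else -1) * bern_prob_except y j S)"
proof -
  have "((\<lambda>y. bern_factor y S j) has_derivative (\<lambda>h. (if j \<in> S then 1 else -1) * h $ j)) (at y)"
    for j
    unfolding bern_factor_def
    by (cases "j \<in> S") (auto intro!: derivative_eq_intros bounded_linear.has_derivative[OF bounded_linear_vec_nth])
  then have "((\<lambda>y. bern_prob y S) has_derivative
      (\<lambda>h. \<Sum>j\<in>UNIV. (if j \<in> S then 1 else -1) * h $ j * bern_prob_except y j S)) (at y)"
    unfolding bern_prob_eq_prod_factor bern_prob_except_def by (rule has_derivative_prod)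
  then show ?thesis
    unfolding gderiv_def by (simp add: inner_vec_def algebra_simps)
qed

lemma gderiv_multilinear_relax:
  "GDERIV (multilinear_relax f) y :>
     (\<chi> i. multilinear_relax (\<lambda>S. f (insert i S)) y - multilinear_relax (\<lambda>S. f (S - {i})) y)"
proof (rule GDERIV_subst)
  show "GDERIV (multilinear_relax f) y :>
      (\<Sum>S\<in>UNIV. f S *\<^sub>R (\<chi> j. (if j \<in> S then 1 else -1) * bern_prob_except y j S))"
    unfolding gderiv_def multilinear_relax_def inner_sum_right inner_scaleR_right
    by (intro has_derivative_sum has_derivative_mult_right gderiv_bern_prob[unfolded gderiv_def])
  have "(\<Sum>S\<in>UNIV. f S * ((if i \<in> S then 1 else -1) * bern_prob_except y i S))
      = multilinear_relax (\<lambda>S. f (insert i S)) y - multilinear_relax (\<lambda>S. f (S - {i})) y" for i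
    unfolding sum_UNIV_set_split_elem[of _ i] multilinear_relax_insert multilinear_relax_remove
    by (simp add: sum_subtractf)
  then show "(\<Sum>S\<in>UNIV. f S *\<^sub>R (\<chi> j. (if j \<in> S then 1 else -1) * bern_prob_except y j S)) =
      (\<chi> i. multilinear_relax (\<lambda>S. f (insert i S)) y - multilinear_relax (\<lambda>S. f (S - {i})) y)"
    by (simp add: vec_eq_iff sum_component)
qed

lemma sum_bern_prob: "(\<Sum>S\<in>UNIV. bern_prob y S) = 1"
proof -
  have "(1::real) = (\<Prod>j\<in>UNIV. y $ j + (1 - y $ j))"
    by simp
  also have "\<dots> = (\<Sum>S\<in>Pow UNIV. (\<Prod>j\<in>S. y $ j) * (\<Prod>j\<in>UNIV - S. 1 - y $ j))"
    by (rule prod_add) simp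
  also have "\<dots> = (\<Sum>S\<in>UNIV. bern_prob y S)"
    unfolding bern_prob_def by (simp add: prod.If_cases Int_absorb2 Collect_mem_eq Diff_eq)
  finally show ?thesis
    by simp
qed

lemma bern_prob_nonneg: "y \<in> cbox 0 1 \<Longrightarrow> 0 \<le> bern_prob y S"
  unfolding bern_prob_def by (intro prod_nonneg) (auto simp: mem_box_cart)

lemma abs_multilinear_relax_le:
  assumes "y \<in> cbox 0 1" and "\<And>S. \<bar>g S\<bar> \<le> e"
  shows "\<bar>multilinear_relax g y\<bar> \<le> e"
proof -
  have "\<bar>multilinear_relax g y\<bar> \<le> (\<Sum>S\<in>UNIV. \<bar>g S\<bar> * bern_prob y S)"
    unfolding multilinear_relax_def
    using sum_abs[of "\<lambda>S. g S * bern_prob y S"] bern_prob_nonneg[OF assms(1)]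
    by (simp add: abs_mult)
  also have "\<dots> \<le> (\<Sum>S\<in>UNIV. e * bern_prob y S)"
    using assms bern_prob_nonneg by (intro sum_mono mult_right_mono) auto
  also have "\<dots> = e"
    by (simp add: sum_distrib_left[symmetric] sum_bern_prob)
  finally show ?thesis .
qed

lemma convex_hull_ind_vec_subset_unit_cube: "convex hull (ind_vec ` F) \<subseteq> cbox 0 1"
  by (rule hull_minimal) (auto simp: ind_vec_def mem_box_cart convex_box)

lemma norm_le_sqrt_card_mult:
  fixes x :: "real ^ 'n::finite"
  assumes "\<And>i. \<bar>x $ i\<bar> \<le> c"
  shows "norm x \<le> sqrt (real CARD('n)) * c"
proof -
  have "0 \<le> c"
    using assms[of undefined] by linarith
  have "norm x \<le> norm (\<chi> i::'n. c)"
    using assms \<open>0 \<le> c\<close> by (intro norm_le_componentwise_cart) simp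
  also have "\<dots> = sqrt (real CARD('n)) * c"
    using \<open>0 \<le> c\<close> by (simp add: norm_vec_def L2_set_def real_sqrt_mult)
  finally show ?thesis .
qed

theorem lemma2:
  fixes f :: "'n::finite set \<Rightarrow> real"
    and fhat :: "nat \<Rightarrow> real ^ 'n \<Rightarrow> real"
    and eps :: "nat \<Rightarrow> real"
    and M :: "'n set set"
    and L :: nat
    and y :: "real ^ 'n"
  assumes f_nonneg: "\<And>S. f S \<ge> 0"
    and fhat_poly: "\<And>L. L \<ge> 1 \<Longrightarrow> is_polynomial (fhat L)"
    and eps_nonneg: "\<And>L. L \<ge> 1 \<Longrightarrow> eps L \<ge> 0"
    and eps_lim: "eps \<longlonglongrightarrow> 0"
    and approx: "\<And>L S. L \<ge> 1 \<Longrightarrow> \<bar>f S - fhat L (ind_vec S)\<bar> \<le> eps L"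
    and M: "matroid_indep M"
    and L: "L \<ge> 1"
    and y: "y \<in> matroid_polytope M"
  shows "\<exists>D. (GDERIV (multilinear_relax f) y :> D) \<and>
             norm (D - poly_estimator (fhat L) y) \<le> 2 * sqrt (real CARD('n)) * eps L"
proof -
  define err where "err S = f S - fhat L (ind_vec S)" for S
  define D where "D = (\<chi> i. multilinear_relax (\<lambda>S. f (insert i S)) y
                           - multilinear_relax (\<lambda>S. f (S - {i})) y)"
  have cube: "y \<in> cbox 0 1"
    using y convex_hull_ind_vec_subset_unit_cube unfolding matroid_polytope_def by blast
  have "\<bar>(D - poly_estimator (fhat L) y) $ i\<bar> \<le> 2 * eps L" for i
  proof -
    have "(D - poly_estimator (fhat L) y) $ i
        = multilinear_relax (\<lambda>S. err (insert i S)) y - multilinear_relax (\<lambda>S. err (S - {i})) y"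
      by (simp add: D_def poly_estimator_def err_def multilinear_relax_def
          left_diff_distrib sum_subtractf)
    also have "\<bar>\<dots>\<bar> \<le> eps L + eps L"
      using abs_multilinear_relax_le[OF cube] approx[OF L]
      by (intro abs_triangle_ineq4[THEN order_trans] add_mono) (simp_all add: err_def)
    finally show ?thesis
      by simp
  qed
  then have "norm (D - poly_estimator (fhat L) y) \<le> 2 * sqrt (real CARD('n)) * eps L"
    using norm_le_sqrt_card_mult by (metis mult.assoc mult.commute)
  moreover have "GDERIV (multilinear_relax f) y :> D"
    unfolding D_def by (rule gderiv_multilinear_relax)
  ultimately show ?thesis
    by blast
qed

end
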